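(* Let $(\mu,\varphi,\omega^*,\omega^\varepsilon)\in\mathbb F^\times\times\mathbb F^3$. For any $\kappa,\lambda,c\in\mathbb F^\times$, the quadruple $(\kappa\lambda,\mu\lambda,c,\lambda)$ is feasible for $(\mu,\varphi,\omega^*,\omega^\varepsilon)$ if and only if: (i) $\kappa$ is a root of $\frac{x^4}{\mu q}-\frac{\omega^\varepsilon+q^{-1}\varphi}{q+q^{-1}}x^3+(\omega^*-\mu q^{-1}-\mu^{-1}q)x^2-\frac{\omega^\varepsilon-q\varphi}{q+q^{-1}}x+\mu q$; (ii) $\lambda$ is a root of $\kappa\mu q x^6+\left(\kappa^{-1}\mu q-\frac{\omega^\varepsilon-q\varphi}{q+q^{-1}}\right)x^4+\left(\frac{\omega^\varepsilon+q^{-1}\varphi}{q+q^{-1}}-\kappa\mu^{-1}q^{-1}\right)x^2-\frac{1}{\kappa\mu q}$; (iii) $c$ is a root of $x^2-rx+1$, where $r=\frac{\varphi+(\kappa\lambda+\kappa^{-1}\lambda^{-1})(\mu\lambda q-\mu^{-1}\lambda^{-1}q^{-1})}{\lambda-\lambda^{-1}}$ if $\lambda^2\ne1$ and $r=\frac{\omega^\varepsilon-(\kappa\lambda+\kappa^{-1}\lambda^{-1})(\mu\lambda+\mu^{-1}\lambda^{-1})}{\lambda q+\lambda^{-1}q^{-1}}$ if $\lambda^2=1$.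
   Context: $\mathbb F$ is an algebraically closed field and $q\in\mathbb F^\times$ is a root of unity of order $d\notin\{1,2,4\}$ (so $q^4\ne1$). For $(a,b,c,\lambda)\in(\mathbb F^\times)^4$ and $(\mu,\varphi,\omega^*,\omega^\varepsilon)\in\mathbb F^\times\times\mathbb F^3$, $(a,b,c,\lambda)$ is called feasible for $(\mu,\varphi,\omega^*,\omega^\varepsilon)$ if $\mu=b\lambda^{-1}$, $\varphi=(c+c^{-1})(\lambda-\lambda^{-1})-(a+a^{-1})(bq-b^{-1}q^{-1})$, $\omega^*=(c+c^{-1})(a+a^{-1})+(b+b^{-1})(\lambda q+\lambda^{-1}q^{-1})$, and $\omega^\varepsilon=(a+a^{-1})(b+b^{-1})+(c+c^{-1})(\lambda q+\lambda^{-1}q^{-1})$. *)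

theory Defs
  imports "HOL-Computational_Algebra.Polynomial"
begin

definition alg_closed_field :: "'a::field itself \<Rightarrow> bool" where
  "alg_closed_field _ \<longleftrightarrow> (\<forall>p :: 'a poly. degree p \<ge> 1 \<longrightarrow> (\<exists>x. poly p x = 0))"

definition root_of_unity_order :: "'a::field \<Rightarrow> nat \<Rightarrow> bool" where
  "root_of_unity_order q d \<longleftrightarrow> d > 0 \<and> q ^ d = 1 \<and> (\<forall>k. 0 < k \<and> k < d \<longrightarrow> q ^ k \<noteq> 1)"

definition feasible :: "'a::field \<Rightarrow> 'a \<Rightarrow> 'a \<Rightarrow> 'a \<Rightarrow> 'a \<Rightarrow> 'a \<Rightarrow> 'a \<Rightarrow> 'a \<Rightarrow> 'a \<Rightarrow> bool" where
  "feasible q a b c lam mu phi wS wE \<longleftrightarrow>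
     mu = b * inverse lam \<and>
     phi = (c + inverse c) * (lam - inverse lam) - (a + inverse a) * (b * q - inverse b * inverse q) \<and>
     wS = (c + inverse c) * (a + inverse a) + (b + inverse b) * (lam * q + inverse lam * inverse q) \<and>
     wE = (a + inverse a) * (b + inverse b) + (c + inverse c) * (lam * q + inverse lam * inverse q)"

end

theory Submission
  imports Defs
begin

text \<open>
  Write \<open>A = a + a\<^sup>-\<^sup>1\<close>, \<open>B = b + b\<^sup>-\<^sup>1\<close>, \<open>C = c + c\<^sup>-\<^sup>1\<close> with \<open>a = \<kappa>\<lambda>\<close>,
  \<open>b = \<mu>\<lambda>\<close>. The coordinates \<open>U = (\<omega>\<^sup>\<epsilon> + q\<^sup>-\<^sup>1\<phi>)/(q + q\<^sup>-\<^sup>1)\<close>,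
  \<open>V = (\<omega>\<^sup>\<epsilon> - q\<phi>)/(q + q\<^sup>-\<^sup>1)\<close> invert \<open>\<phi> = U - V\<close>, \<open>\<omega>\<^sup>\<epsilon> = qU + V/q\<close>, and in them the
  \<open>\<phi>\<close>- and \<open>\<omega>\<^sup>\<epsilon>\<close>-equations of feasibility decouple into \<open>U = C\<lambda> + A/(bq)\<close> and
  \<open>V = C/\<lambda> + Abq\<close>. Let \<open>u, v, s\<close> be the residuals of these two equations and of the
  \<open>\<omega>\<^sup>*\<close>-equation. Identically in \<open>C\<close>, the quartic in \<open>\<kappa>\<close> is \<open>\<kappa>\<^sup>2s - \<kappa>\<^sup>3u - \<kappa>v\<close> and the
  sextic in \<open>\<lambda>\<close> is \<open>\<lambda>\<^sup>2(u - \<lambda>\<^sup>2v)\<close>, while the quadratic in \<open>c\<close> says that \<open>C\<close> solves the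
  \<open>\<phi>\<close>-equation, or the \<open>\<omega>\<^sup>\<epsilon>\<close>-equation when \<open>\<lambda>\<^sup>2 = 1\<close> kills the coefficient of \<open>C\<close> in
  the former. Both sides of the theorem thus describe linear systems in \<open>u, v, s\<close>, and these
  are equivalent since \<open>q + q\<^sup>-\<^sup>1 \<noteq> 0\<close>. This is the only use of \<open>q\<^sup>4 \<noteq> 1\<close>.
\<close>

lemma root_of_unity_order_nonzero:
  assumes "root_of_unity_order q d"
  shows "q \<noteq> 0"
  using assms unfolding root_of_unity_order_def by (metis power_0_left zero_neq_one)

lemma root_of_unity_order_power_eq_1_iff:
  assumes "root_of_unity_order q d"
  shows "q ^ k = 1 \<longleftrightarrow> d dvd k"
proof
  have d: "d > 0" "q ^ d = 1" "\<And>j. 0 < j \<Longrightarrow> j < d \<Longrightarrow> q ^ j \<noteq> 1"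
    using assms unfolding root_of_unity_order_def by auto
  assume "q ^ k = 1"
  have "q ^ k = q ^ (d * (k div d) + k mod d)" by simp
  also have "\<dots> = (q ^ d) ^ (k div d) * q ^ (k mod d)"
    by (simp only: power_add power_mult)
  finally have "q ^ k = q ^ (k mod d)" using d(2) by simp
  with \<open>q ^ k = 1\<close> have "q ^ (k mod d) = 1" by simp
  then have "k mod d = 0" using d(1,3) mod_less_divisor by blast
  then show "d dvd k" by auto
next
  assume "d dvd k"
  then show "q ^ k = 1"
    using assms unfolding root_of_unity_order_def by (auto simp: power_mult)
qed

lemma root_of_unity_order_power4_neq_1:
  assumes "root_of_unity_order q d" and "d \<notin> {1, 2, 4}"
  shows "q ^ 4 \<noteq> 1"
proof
  assume "q ^ 4 = 1"
  then have "d dvd 4" using assms(1) root_of_unity_order_power_eq_1_iff by blast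
  then have "d \<le> 4" and "d \<noteq> 0" and "d \<noteq> 3" by (auto dest: dvd_imp_le intro!: Nat.gr0I)
  then have "d \<in> {1, 2, 4}" by auto
  then show False using assms(2) by blast
qed

lemma add_inverse_neq_0:
  fixes q :: "'a::field"
  assumes "q \<noteq> 0" and "q ^ 4 \<noteq> 1"
  shows "q + inverse q \<noteq> 0"
proof
  assume "q + inverse q = 0"
  then have "q ^ 2 = -1"
    using assms(1) by (simp add: field_simps power2_eq_square eq_neg_iff_add_eq_0)
  then have "q ^ 4 = 1"
    using power_mult[of q 2 2] by simp
  then show False using assms(2) by blast
qed

lemma quadratic_reciprocal_root_iff:
  fixes c r :: "'a::field"
  assumes "c \<noteq> 0"
  shows "c ^ 2 - r * c + 1 = 0 \<longleftrightarrow> c + inverse c = r"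
proof -
  have "c ^ 2 - r * c + 1 = c * (c + inverse c - r)"
    using assms by (simp add: field_simps power2_eq_square)
  then show ?thesis using assms by simp
qed

lemma diff_twisted_sum_inverse:
  fixes q phi w :: "'a::field"
  assumes "q \<noteq> 0" and "q + inverse q \<noteq> 0"
  defines "U \<equiv> (w + inverse q * phi) / (q + inverse q)"
    and "V \<equiv> (w - q * phi) / (q + inverse q)"
  shows "phi = U - V" and "w = q * U + V / q"
proof -
  have hU: "U * (q + inverse q) = w + inverse q * phi"
    and hV: "V * (q + inverse q) = w - q * phi"
    using assms(2) by (simp_all add: U_def V_def)
  have "(U - V) * (q + inverse q) = phi * (q + inverse q)"
    unfolding left_diff_distrib hU hV by (simp add: algebra_simps)
  moreover have "(q * U + V / q) * (q + inverse q) = q * (U * (q + inverse q)) + V * (q + inverse q) / q"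
    by (simp add: distrib_right mult.assoc)
  then have "(q * U + V / q) * (q + inverse q) = w * (q + inverse q)"
    unfolding hU hV using assms(1) by (simp add: field_simps)
  ultimately show "phi = U - V" and "w = q * U + V / q"
    using assms(2) by simp_all
qed

lemma feasible_residuals_split:
  fixes q b lam phi w A C :: "'a::field"
  assumes "q \<noteq> 0" and "q + inverse q \<noteq> 0" and "b \<noteq> 0" and "lam \<noteq> 0"
  defines "u \<equiv> (w + inverse q * phi) / (q + inverse q) - (C * lam + A / (b * q))"
    and "v \<equiv> (w - q * phi) / (q + inverse q) - (C / lam + A * b * q)"
  shows "phi - (C * (lam - inverse lam) - A * (b * q - inverse b * inverse q)) = u - v"
    and "w - (A * (b + inverse b) + C * (lam * q + inverse lam * inverse q)) = q * u + v / q"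
proof -
  define U where "U = (w + inverse q * phi) / (q + inverse q)"
  define V where "V = (w - q * phi) / (q + inverse q)"
  have "phi = U - V" and "w = q * U + V / q"
    using diff_twisted_sum_inverse [OF assms(1,2)] unfolding U_def V_def by blast+
  moreover have "C * (lam - inverse lam) - A * (b * q - inverse b * inverse q)
      = (C * lam + A / (b * q)) - (C / lam + A * b * q)"
    and "A * (b + inverse b) + C * (lam * q + inverse lam * inverse q)
      = q * (C * lam + A / (b * q)) + (C / lam + A * b * q) / q"
    using assms(1,3,4) by (simp_all add: field_simps)
  ultimately show "phi - (C * (lam - inverse lam) - A * (b * q - inverse b * inverse q)) = u - v"
    and "w - (A * (b + inverse b) + C * (lam * q + inverse lam * inverse q)) = q * u + v / q"
    unfolding u_def v_def U_def [symmetric] V_def [symmetric]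
    by (simp_all add: algebra_simps diff_divide_distrib)
qed

lemma eq_solution_of_phi_or_omega_iff:
  fixes q lam phi w A B C M :: "'a::field"
  assumes "q \<noteq> 0" and "q + inverse q \<noteq> 0" and "lam \<noteq> 0"
  shows "C = (if lam ^ 2 \<noteq> 1 then (phi + A * M) / (lam - inverse lam)
               else (w - A * B) / (lam * q + inverse lam * inverse q)) \<longleftrightarrow>
    (if lam ^ 2 \<noteq> 1 then phi = C * (lam - inverse lam) - A * M
     else w = A * B + C * (lam * q + inverse lam * inverse q))"
proof (cases "lam ^ 2 = 1")
  case True
  then have "inverse lam = lam"
    using assms(3) by (simp add: power2_eq_square inverse_unique)
  then have "lam * q + inverse lam * inverse q = lam * (q + inverse q)"
    by (simp add: distrib_left)
  then have "lam * q + inverse lam * inverse q \<noteq> 0"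
    using assms(2,3) by simp
  then show ?thesis using True by (auto simp: eq_divide_eq algebra_simps)
next
  case False
  then have "lam - inverse lam \<noteq> 0"
    using assms(3) by (auto simp: power2_eq_square field_simps)
  then show ?thesis using False by (auto simp: eq_divide_eq algebra_simps)
qed

lemma residual_system_iff:
  fixes q k l u v s d1 d2 :: "'a::field"
  assumes "q \<noteq> 0" and "q + inverse q \<noteq> 0" and "k \<noteq> 0" and "l \<noteq> 0"
    and "d2 = u - v" and "d1 = q * u + v / q"
  shows "d1 = 0 \<and> d2 = 0 \<and> s = 0 \<longleftrightarrow>
    k ^ 2 * s - k ^ 3 * u - k * v = 0 \<and> l ^ 2 * (u - l ^ 2 * v) = 0 \<and>
    (if l ^ 2 \<noteq> 1 then d2 = 0 else d1 = 0)"
    (is "?vanish \<longleftrightarrow> ?system")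
proof -
  have d1: "d1 = v * (q + inverse q)" if "u = v"
    using that assms(1,6) by (simp add: field_simps)
  show ?thesis
  proof
    assume ?vanish
    then have "u = v" using assms(5) by simp
    moreover from this have "v = 0" using \<open>?vanish\<close> d1 assms(2) by simp
    ultimately show ?system using \<open>?vanish\<close> by simp
  next
    assume ?system
    then have u: "u = l ^ 2 * v" using assms(4) by simp
    have "v = 0"
    proof (cases "l ^ 2 = 1")
      case True
      then show ?thesis using \<open>?system\<close> u d1 assms(2) by simp
    next
      case False
      then have "(l ^ 2 - 1) * v = 0"
        using \<open>?system\<close> u assms(5) by (simp add: algebra_simps)
      then show ?thesis using False by simp
    qed
    moreover from this have "u = 0" and "s = 0" using \<open>?system\<close> u assms(3) by simp_all
    ultimately show ?vanish using assms(5,6) by simp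
  qed
qed

theorem theorem5p1:
  fixes q mu phi wS wE \<kappa> lam c :: "'a::field"
    and d :: nat
  assumes "alg_closed_field TYPE('a)"
    and "root_of_unity_order q d" and "d \<notin> {1, 2, 4}"
    and "mu \<noteq> 0" and "\<kappa> \<noteq> 0" and "lam \<noteq> 0" and "c \<noteq> 0"
  shows "feasible q (\<kappa> * lam) (mu * lam) c lam mu phi wS wE \<longleftrightarrow>
    ( \<kappa> ^ 4 / (mu * q)
        - (wE + inverse q * phi) / (q + inverse q) * \<kappa> ^ 3
        + (wS - mu * inverse q - inverse mu * q) * \<kappa> ^ 2
        - (wE - q * phi) / (q + inverse q) * \<kappa>
        + mu * q = 0 \<and>
      \<kappa> * mu * q * lam ^ 6
        + (inverse \<kappa> * mu * q - (wE - q * phi) / (q + inverse q)) * lam ^ 4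
        + ((wE + inverse q * phi) / (q + inverse q) - \<kappa> * inverse mu * inverse q) * lam ^ 2
        - 1 / (\<kappa> * mu * q) = 0 \<and>
      (let r = (if lam ^ 2 \<noteq> 1
                then (phi + (\<kappa> * lam + inverse \<kappa> * inverse lam) *
                        (mu * lam * q - inverse mu * inverse lam * inverse q)) / (lam - inverse lam)
                else (wE - (\<kappa> * lam + inverse \<kappa> * inverse lam) *
                        (mu * lam + inverse mu * inverse lam)) / (lam * q + inverse lam * inverse q))
       in c ^ 2 - r * c + 1 = 0))"
proof -
  have q: "q \<noteq> 0" "q + inverse q \<noteq> 0"
    using assms(2,3) root_of_unity_order_nonzero root_of_unity_order_power4_neq_1 add_inverse_neq_0
    by blast+
  define A where "A = \<kappa> * lam + inverse \<kappa> * inverse lam"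
  define B where "B = mu * lam + inverse mu * inverse lam"
  define C where "C = c + inverse c"
  define L where "L = lam * q + inverse lam * inverse q"
  define M where "M = mu * lam * q - inverse mu * inverse lam * inverse q"
  define U where "U = (wE + inverse q * phi) / (q + inverse q)"
  define V where "V = (wE - q * phi) / (q + inverse q)"
  define u where "u = U - (C * lam + A / (mu * lam * q))"
  define v where "v = V - (C / lam + A * (mu * lam) * q)"
  define s where "s = wS - (C * A + B * L)"
  define D1 where "D1 = wE - (A * B + C * L)"
  define D2 where "D2 = phi - (C * (lam - inverse lam) - A * M)"
  have D: "D2 = u - v" "D1 = q * u + v / q"
    using feasible_residuals_split [where b = "mu * lam" and A = A and C = C, OF q] assms(4,6)
    unfolding D1_def D2_def u_def v_def U_def V_def B_def L_def M_def by simp_all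
  have feasible: "feasible q (\<kappa> * lam) (mu * lam) c lam mu phi wS wE \<longleftrightarrow> D1 = 0 \<and> D2 = 0 \<and> s = 0"
    unfolding feasible_def D1_def D2_def s_def A_def B_def C_def L_def M_def
    using assms(6) by (auto simp: algebra_simps)
  have quartic: "\<kappa> ^ 4 / (mu * q) - U * \<kappa> ^ 3 + (wS - mu * inverse q - inverse mu * q) * \<kappa> ^ 2
      - V * \<kappa> + mu * q = \<kappa> ^ 2 * s - \<kappa> ^ 3 * u - \<kappa> * v"
    unfolding s_def u_def v_def A_def B_def L_def using assms(4-6) q(1)
    by (simp add: field_simps eval_nat_numeral)
  have sextic: "\<kappa> * mu * q * lam ^ 6 + (inverse \<kappa> * mu * q - V) * lam ^ 4
      + (U - \<kappa> * inverse mu * inverse q) * lam ^ 2 - 1 / (\<kappa> * mu * q) = lam ^ 2 * (u - lam ^ 2 * v)"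
    unfolding u_def v_def A_def using assms(4-6) q(1)
    by (simp add: field_simps eval_nat_numeral)
  define r where "r = (if lam ^ 2 \<noteq> 1 then (phi + A * M) / (lam - inverse lam) else (wE - A * B) / L)"
  have quadratic: "c ^ 2 - r * c + 1 = 0 \<longleftrightarrow> (if lam ^ 2 \<noteq> 1 then D2 = 0 else D1 = 0)"
    using quadratic_reciprocal_root_iff [OF assms(7)] eq_solution_of_phi_or_omega_iff [OF q assms(6)]
    unfolding r_def D1_def D2_def C_def L_def by simp
  show ?thesis
    using residual_system_iff [OF q assms(5,6) D, of s] feasible quartic sextic quadratic
    unfolding r_def U_def V_def A_def B_def L_def M_def Let_def by simp
qed

end
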